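(* Let $n \ge 2$, $G = Q_{4n}$, $k\ge0$, $n_1,m_1,\dots,n_k,m_k$ nonzero integers, and let $\lambda_R \in \mathbb{Z}C_{2n}$ be as defined below. Let $q: \mathbb{Z}C_{2n} \to \mathbb{Z}C_n$ be induced by the quotient $C_{2n} \to C_n$, and let $\bar{\cdot}$ be the involution of $\mathbb{Z}C_{2n}$ with $x^i \mapsto x^{-i}$. Then: (i) the equation $\alpha(xy - 1) + \beta\lambda_R = 1$ has a solution $\alpha, \beta \in \mathbb{Z}G$ if and only if $\delta q(\lambda_R) + \gamma q(\bar\lambda_R) = 1$ has a solution $\delta, \gamma \in \mathbb{Z}C_n$. More specifically, if $\widetilde\delta, \widetilde\gamma \in \mathbb{Z}C_{2n}$ lift such $\delta, \gamma$, then there exists $\varepsilon \in \mathbb{Z}C_{2n}$ with $\widetilde\delta\lambda_R + \widetilde\gamma\bar\lambda_R + \varepsilon(x^n - 1) = 1$, and one may take $\alpha = \varepsilon - \widetilde\gamma\bar\lambda_R + \varepsilon xy$, $\beta = \widetilde\delta + \widetilde\gamma xy$. (ii) If $\delta\lambda_R + \gamma\bar\lambda_R = 1$ for some $\delta, \gamma \in \mathbb{Z}C_{2n}$, then $\alpha = -\gamma\bar\lambda_R$, $\beta = \delta + \gamma xy$ solve $\alpha(xy-1) + \beta\lambda_R = 1$.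
   Context: $G = Q_{4n} = \langle x, y \mid x^n y^{-2}, xyxy^{-1} \rangle$ and $C_{2n} = \langle x \rangle \le G$ (so $\mathbb{Z}C_{2n} \subseteq \mathbb{Z}G$). With $n_{k+1} = 1-\sum_{i=1}^k n_i$, $m_{k+1} = 1-\sum_{i=1}^k m_i$, set $\lambda_R = \sum_{i=1}^{k+1} x^{\sum_{j=1}^{i-1}(n_j - m_j)} \sigma(n_i)$, where $\sigma(r) = 1 + x + \dots + x^{r-1}$ for $r>0$, $\sigma(0) = 0$, $\sigma(r) = -x^r(1 + \dots + x^{|r|-1})$ for $r<0$. *)

theory Defs
  imports "HOL-Algebra.Group"
begin

text \<open>An element of the integral group ring ZG of a finite group G is a function
  carrier G -> int (extended by 0 outside the carrier).\<close>

definition gr_elems :: "('a, 'b) monoid_scheme \<Rightarrow> ('a \<Rightarrow> int) set" where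
  "gr_elems G = {f. \<forall>z. z \<notin> carrier G \<longrightarrow> f z = 0}"

definition gr_add :: "('a \<Rightarrow> int) \<Rightarrow> ('a \<Rightarrow> int) \<Rightarrow> ('a \<Rightarrow> int)" where
  "gr_add f g = (\<lambda>z. f z + g z)"

definition gr_neg :: "('a \<Rightarrow> int) \<Rightarrow> ('a \<Rightarrow> int)" where
  "gr_neg f = (\<lambda>z. - f z)"

definition gr_sub :: "('a \<Rightarrow> int) \<Rightarrow> ('a \<Rightarrow> int) \<Rightarrow> ('a \<Rightarrow> int)" where
  "gr_sub f g = (\<lambda>z. f z - g z)"

definition gr_of :: "'a \<Rightarrow> ('a \<Rightarrow> int)" where
  "gr_of g = (\<lambda>z. if z = g then 1 else 0)"

definition gr_one :: "('a, 'b) monoid_scheme \<Rightarrow> ('a \<Rightarrow> int)" where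
  "gr_one G = gr_of \<one>\<^bsub>G\<^esub>"

definition gr_mul :: "('a, 'b) monoid_scheme \<Rightarrow> ('a \<Rightarrow> int) \<Rightarrow> ('a \<Rightarrow> int) \<Rightarrow> ('a \<Rightarrow> int)" where
  "gr_mul G f g = (\<lambda>z. \<Sum>(u, v) \<in> {(u, v). u \<in> carrier G \<and> v \<in> carrier G \<and> u \<otimes>\<^bsub>G\<^esub> v = z}. f u * g v)"

definition gr_map :: "('a, 'b) monoid_scheme \<Rightarrow> ('a \<Rightarrow> 'c) \<Rightarrow> ('a \<Rightarrow> int) \<Rightarrow> ('c \<Rightarrow> int)" where
  "gr_map G h f = (\<lambda>z. \<Sum>u \<in> {u \<in> carrier G. h u = z}. f u)"

text \<open>Cyclic group C_m = <x>, with x^i represented by i mod m, so x = 1.\<close>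
definition cyc :: "int \<Rightarrow> int monoid" where
  "cyc m = \<lparr>carrier = {0..<m}, mult = (\<lambda>a b. (a + b) mod m), one = 0\<rparr>"

definition cx :: "int \<Rightarrow> int \<Rightarrow> (int \<Rightarrow> int)" where
  "cx m e = gr_of (e mod m)"

text \<open>Quaternion group Q_{4n} = <x, y | x^n = y^2, x y x y^{-1} = 1>, with the element
  x^i y^j (0 <= i < 2n, j in {0,1}) represented by (i, j).  Relations used:
  y x^k = x^{-k} y and y^2 = x^n.\<close>
definition quat :: "int \<Rightarrow> (int \<times> int) monoid" where
  "quat n = \<lparr>carrier = {(i, j). 0 \<le> i \<and> i < 2 * n \<and> (j = 0 \<or> j = 1)},
     mult = (\<lambda>(i, j) (k, l).
        if j = 0 then ((i + k) mod (2 * n), l)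
        else if l = 0 then ((i - k) mod (2 * n), 1)
        else ((i - k + n) mod (2 * n), 0)),
     one = (0, 0)\<rparr>"

definition qx :: "int \<times> int" where "qx = (1, 0)"
definition qy :: "int \<times> int" where "qy = (0, 1)"

definition incl :: "int \<Rightarrow> (int \<Rightarrow> int) \<Rightarrow> (int \<times> int \<Rightarrow> int)" where
  "incl n f = gr_map (cyc (2 * n)) (\<lambda>i. (i, 0)) f"

definition qmap :: "int \<Rightarrow> (int \<Rightarrow> int) \<Rightarrow> (int \<Rightarrow> int)" where
  "qmap n f = gr_map (cyc (2 * n)) (\<lambda>i. i mod n) f"

definition cbar :: "int \<Rightarrow> (int \<Rightarrow> int) \<Rightarrow> (int \<Rightarrow> int)" where
  "cbar n f = gr_map (cyc (2 * n)) (\<lambda>i. (- i) mod (2 * n)) f"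

definition csigma :: "int \<Rightarrow> int \<Rightarrow> (int \<Rightarrow> int)" where
  "csigma m r =
    (if r > 0 then (\<lambda>z. \<Sum>t \<in> {0..<r}. cx m t z)
     else if r = 0 then (\<lambda>z. 0)
     else gr_neg (gr_mul (cyc m) (cx m r) (\<lambda>z. \<Sum>t \<in> {0..<\<bar>r\<bar>}. cx m t z)))"

text \<open>ns = [n_1,...,n_k], ms = [m_1,...,m_k]; n_{k+1} = 1 - sum ns, m_{k+1} = 1 - sum ms.
  lambda_R = sum_{i=1}^{k+1} x^{sum_{j<i} (n_j - m_j)} sigma(n_i) (written 0-indexed).\<close>
definition lambdaR :: "int \<Rightarrow> int list \<Rightarrow> int list \<Rightarrow> (int \<Rightarrow> int)" where
  "lambdaR n ns ms =
    (let N = ns @ [1 - sum_list ns]; M = ms @ [1 - sum_list ms]; m = 2 * n in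
     (\<lambda>z. \<Sum>i < length ns + 1.
        gr_mul (cyc m) (cx m (\<Sum>j < i. N ! j - M ! j)) (csigma m (N ! i)) z))"

end

theory Submission
  imports Defs "HOL-Algebra.Ring"
begin

text \<open>
  Every element of \<open>\<int>Q\<^sub>4\<^sub>n\<close> can be written uniquely as \<open>a + b y\<close> with \<open>a, b\<close> in the
  commutative ring \<open>\<int>C\<^sub>2\<^sub>n = \<int>\<langle>x\<rangle>\<close>, and \<open>y c = cbar c y\<close>, \<open>y\<^sup>2 = x\<^sup>n\<close>. Writing
  \<open>\<alpha> = a\<^sub>1 + a\<^sub>2 y\<close> and \<open>\<beta> = b\<^sub>1 + b\<^sub>2 y\<close>, the equation \<open>\<alpha>(xy - 1) + \<beta>\<lambda> = 1\<close> becomes the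
  pair of equations \<open>-a\<^sub>1 + x\<^sup>n a\<^sub>2 x\<^sup>-\<^sup>1 + b\<^sub>1 \<lambda> = 1\<close> and \<open>a\<^sub>1 x - a\<^sub>2 + b\<^sub>2 cbar \<lambda> = 0\<close> in
  \<open>\<int>C\<^sub>2\<^sub>n\<close>. Eliminating \<open>a\<^sub>2\<close> leaves a relation \<open>\<delta>\<lambda> + \<gamma> cbar \<lambda> + \<epsilon>(x\<^sup>n - 1) = 1\<close>, and
  conversely every such relation gives the solution \<open>\<alpha> = \<epsilon> - \<gamma> cbar \<lambda> + \<epsilon> xy\<close>,
  \<open>\<beta> = \<delta> + \<gamma> xy\<close>. Since the kernel of \<open>q : \<int>C\<^sub>2\<^sub>n \<rightarrow> \<int>C\<^sub>n\<close> is generated by \<open>x\<^sup>n - 1\<close>,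
  lifts \<open>\<delta>, \<gamma>\<close> satisfy such a relation for some \<open>\<epsilon>\<close> exactly when
  \<open>q(\<delta>) q(\<lambda>) + q(\<gamma>) q(cbar \<lambda>) = 1\<close>.
\<close>

section \<open>Integral group rings\<close>

lemma gr_mul_as_double_sum:
  assumes "finite (carrier G)"
  shows "gr_mul G f g w =
    (\<Sum>u\<in>carrier G. \<Sum>v\<in>carrier G. if u \<otimes>\<^bsub>G\<^esub> v = w then f u * g v else 0)"
proof -
  have "{(u, v). u \<in> carrier G \<and> v \<in> carrier G \<and> u \<otimes>\<^bsub>G\<^esub> v = w}
      = {p \<in> carrier G \<times> carrier G. fst p \<otimes>\<^bsub>G\<^esub> snd p = w}"
    by auto
  then have "gr_mul G f g w = (\<Sum>p\<in>carrier G \<times> carrier G.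
      if fst p \<otimes>\<^bsub>G\<^esub> snd p = w then f (fst p) * g (snd p) else 0)"
    unfolding gr_mul_def using assms by (simp add: sum.inter_filter case_prod_beta)
  then show ?thesis
    by (simp add: sum.cartesian_product case_prod_beta)
qed

lemma gr_mul_closed:
  assumes "\<And>u v. u \<in> carrier G \<Longrightarrow> v \<in> carrier G \<Longrightarrow> u \<otimes>\<^bsub>G\<^esub> v \<in> carrier G"
  shows "gr_mul G f g \<in> gr_elems G"
  unfolding gr_elems_def gr_mul_def
proof (intro CollectI allI impI)
  fix z assume "z \<notin> carrier G"
  with assms have "{(u, v). u \<in> carrier G \<and> v \<in> carrier G \<and> u \<otimes>\<^bsub>G\<^esub> v = z} = {}"
    by auto
  then show "(\<Sum>(u, v) \<in> {(u, v). u \<in> carrier G \<and> v \<in> carrier G \<and> u \<otimes>\<^bsub>G\<^esub> v = z}. f u * g v) = 0"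
    by (simp only: sum.empty)
qed

lemma gr_mul_add_right: "gr_mul G f (gr_add g h) = gr_add (gr_mul G f g) (gr_mul G f h)"
  unfolding gr_mul_def gr_add_def by (simp add: sum.distrib distrib_left case_prod_beta)

lemma gr_mul_sub_right: "gr_mul G f (gr_sub g h) = gr_sub (gr_mul G f g) (gr_mul G f h)"
  unfolding gr_mul_def gr_sub_def by (simp add: sum_subtractf right_diff_distrib case_prod_beta)

lemma (in group) gr_mul_group_eq:
  assumes "finite (carrier G)" "w \<in> carrier G"
  shows "gr_mul G f g w = (\<Sum>u\<in>carrier G. f u * g (inv u \<otimes> w))"
proof -
  have "(\<Sum>v\<in>carrier G. if u \<otimes> v = w then f u * g v else 0) = f u * g (inv u \<otimes> w)"
    if u: "u \<in> carrier G" for u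
  proof -
    have "u \<otimes> v = w \<longleftrightarrow> v = inv u \<otimes> w" if "v \<in> carrier G" for v
      using u that assms(2) by (metis inv_solve_left')
    then show ?thesis
      using u assms by (simp cong: if_cong)
  qed
  then show ?thesis
    by (simp add: gr_mul_as_double_sum[OF assms(1)])
qed

lemma (in comm_group) gr_mul_comm:
  assumes "finite (carrier G)"
  shows "gr_mul G f g = gr_mul G g f"
proof
  fix w
  show "gr_mul G f g w = gr_mul G g f w"
  proof (cases "w \<in> carrier G")
    case True
    have "(\<Sum>u\<in>carrier G. f u * g (inv u \<otimes> w)) = (\<Sum>v\<in>carrier G. g v * f (inv v \<otimes> w))"
      by (rule sum.reindex_bij_witness[of _ "\<lambda>v. inv v \<otimes> w" "\<lambda>u. inv u \<otimes> w"])
         (use True in \<open>auto simp: inv_mult m_ac\<close>)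
    with True show ?thesis
      by (simp add: gr_mul_group_eq assms)
  next
    case False
    then show ?thesis
      using gr_mul_closed[of G] by (simp add: gr_elems_def)
  qed
qed

lemma (in group) gr_one_mul:
  assumes "finite (carrier G)" "f \<in> gr_elems G"
  shows "gr_mul G (gr_one G) f = f"
proof
  fix w
  show "gr_mul G (gr_one G) f w = f w"
  proof (cases "w \<in> carrier G")
    case True
    then show ?thesis
      by (simp add: gr_mul_group_eq assms gr_one_def gr_of_def if_distrib[of "\<lambda>c. c * _"]
          cong: if_cong)
  next
    case False
    then show ?thesis
      using gr_mul_closed[of G] assms(2) by (simp add: gr_elems_def)
  qed
qed

lemma (in group) gr_mul_assoc:
  assumes "finite (carrier G)"
  shows "gr_mul G (gr_mul G f g) h = gr_mul G f (gr_mul G g h)"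
proof
  fix w
  show "gr_mul G (gr_mul G f g) h w = gr_mul G f (gr_mul G g h) w"
  proof (cases "w \<in> carrier G")
    case True
    have shift: "(\<Sum>v\<in>carrier G. g (inv u \<otimes> v) * h (inv v \<otimes> w)) = gr_mul G g h (inv u \<otimes> w)"
      if u: "u \<in> carrier G" for u
    proof -
      have "inv (inv u \<otimes> v) \<otimes> (inv u \<otimes> w) = inv v \<otimes> w" if "v \<in> carrier G" for v
        using u that True by (simp add: inv_mult_group m_assoc) (simp add: m_assoc[symmetric])
      then have "(\<Sum>v\<in>carrier G. g (inv u \<otimes> v) * h (inv v \<otimes> w))
          = (\<Sum>t\<in>carrier G. g t * h (inv t \<otimes> (inv u \<otimes> w)))"
        by (intro sum.reindex_bij_witness[of _ "\<lambda>t. u \<otimes> t" "\<lambda>v. inv u \<otimes> v"])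
           (use u in \<open>auto simp: m_assoc[symmetric]\<close>)
      with u True show ?thesis
        by (simp add: gr_mul_group_eq assms)
    qed
    have "gr_mul G (gr_mul G f g) h w
        = (\<Sum>v\<in>carrier G. \<Sum>u\<in>carrier G. f u * (g (inv u \<otimes> v) * h (inv v \<otimes> w)))"
      using True by (simp add: gr_mul_group_eq assms sum_distrib_right mult.assoc)
    also have "\<dots> = (\<Sum>u\<in>carrier G. f u * gr_mul G g h (inv u \<otimes> w))"
      by (subst sum.swap) (simp add: sum_distrib_left[symmetric] shift)
    also have "\<dots> = gr_mul G f (gr_mul G g h) w"
      using True by (simp add: gr_mul_group_eq assms)
    finally show ?thesis .
  next
    case False
    then show ?thesis
      using gr_mul_closed[of G] by (simp add: gr_elems_def)
  qed
qed

lemma (in group) gr_mul_gr_of_right: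
  assumes "finite (carrier G)" "a \<in> carrier G" "w \<in> carrier G"
  shows "gr_mul G f (gr_of a) w = f (w \<otimes> inv a)"
proof -
  have "inv u \<otimes> w = a \<longleftrightarrow> u = w \<otimes> inv a" if "u \<in> carrier G" for u
    using assms that by (metis inv_closed inv_inv inv_solve_left inv_solve_right m_closed)
  then have "(\<Sum>u\<in>carrier G. f u * gr_of a (inv u \<otimes> w))
      = (\<Sum>u\<in>carrier G. if u = w \<otimes> inv a then f u else 0)"
    by (intro sum.cong) (auto simp: gr_of_def)
  then show ?thesis
    using assms by (simp add: gr_mul_group_eq)
qed

lemma (in group) gr_of_mult:
  assumes "finite (carrier G)" "a \<in> carrier G" "b \<in> carrier G"
  shows "gr_mul G (gr_of a) (gr_of b) = gr_of (a \<otimes> b)"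
proof
  fix w
  show "gr_mul G (gr_of a) (gr_of b) w = gr_of (a \<otimes> b) w"
  proof (cases "w \<in> carrier G")
    case True
    have "w \<otimes> inv b = a \<longleftrightarrow> w = a \<otimes> b"
      using assms True by (metis inv_solve_right m_closed inv_closed)
    with True show ?thesis
      by (simp add: gr_mul_gr_of_right assms) (simp add: gr_of_def)
  next
    case False
    then show ?thesis
      using gr_mul_closed[of G] assms by (auto simp: gr_elems_def gr_of_def)
  qed
qed

definition group_ring :: "('a, 'b) monoid_scheme \<Rightarrow> ('a \<Rightarrow> int) ring" where
  "group_ring G = \<lparr>carrier = gr_elems G, mult = gr_mul G, one = gr_one G,
     zero = (\<lambda>_. 0), add = gr_add\<rparr>"

lemma group_ring_simps:
  "carrier (group_ring G) = gr_elems G" "mult (group_ring G) = gr_mul G"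
  "one (group_ring G) = gr_one G" "zero (group_ring G) = (\<lambda>_. 0)" "add (group_ring G) = gr_add"
  by (simp_all add: group_ring_def)

lemma abelian_group_group_ring: "abelian_group (group_ring G)"
proof (rule abelian_groupI)
  fix f assume "f \<in> carrier (group_ring G)"
  then show "\<exists>g\<in>carrier (group_ring G). g \<oplus>\<^bsub>group_ring G\<^esub> f = \<zero>\<^bsub>group_ring G\<^esub>"
    by (intro bexI[of _ "gr_neg f"])
       (auto simp: group_ring_simps gr_elems_def gr_neg_def gr_add_def)
qed (auto simp: group_ring_simps gr_elems_def gr_add_def)

lemma group_ring_a_inv:
  assumes "f \<in> gr_elems G"
  shows "\<ominus>\<^bsub>group_ring G\<^esub> f = gr_neg f"
proof -
  interpret abelian_group "group_ring G"
    by (rule abelian_group_group_ring)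
  show ?thesis
    by (rule minus_equality)
       (use assms in \<open>auto simp: group_ring_simps gr_elems_def gr_neg_def gr_add_def\<close>)
qed

lemma group_ring_minus:
  "f \<in> gr_elems G \<Longrightarrow> g \<in> gr_elems G \<Longrightarrow> f \<ominus>\<^bsub>group_ring G\<^esub> g = gr_sub f g"
  by (simp add: a_minus_def group_ring_a_inv group_ring_simps gr_add_def gr_neg_def gr_sub_def)

lemma cring_group_ring:
  assumes "comm_group G" "finite (carrier G)"
  shows "cring (group_ring G)"
proof -
  interpret comm_group G by fact
  have closed: "gr_mul G f g \<in> gr_elems G" for f g
    by (rule gr_mul_closed) simp
  have one: "gr_one G \<in> gr_elems G"
    by (simp add: gr_one_def gr_of_def gr_elems_def)
  show ?thesis
  proof (rule cringI)
    show "Group.comm_monoid (group_ring G)"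
      by (rule comm_monoidI)
         (auto simp: group_ring_simps closed one gr_mul_assoc gr_one_mul assms intro: gr_mul_comm)
  qed (auto simp: abelian_group_group_ring group_ring_simps gr_mul_add_right gr_mul_comm assms)
qed

lemma gr_map_gr_of:
  assumes "finite (carrier G)" "u \<in> carrier G"
  shows "gr_map G h (gr_of u) = gr_of (h u)"
  using assms by (auto simp: gr_map_def gr_of_def)

lemma gr_map_closed:
  assumes "\<And>u. u \<in> carrier G \<Longrightarrow> h u \<in> carrier H"
  shows "gr_map G h f \<in> gr_elems H"
  unfolding gr_elems_def gr_map_def
proof (intro CollectI allI impI)
  fix z assume "z \<notin> carrier H"
  with assms have "{u \<in> carrier G. h u = z} = {}"
    by auto
  then show "sum f {u \<in> carrier G. h u = z} = 0"
    by (simp only: sum.empty)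
qed

lemma gr_map_add: "gr_map G h (gr_add f g) = gr_add (gr_map G h f) (gr_map G h g)"
  by (simp add: gr_map_def gr_add_def sum.distrib)

lemma gr_map_neg: "gr_map G h (gr_neg f) = gr_neg (gr_map G h f)"
  by (simp add: gr_map_def gr_neg_def sum_negf)

text \<open>Both sides are the sum of \<open>f a * g b\<close> over the pairs \<open>(a, b)\<close> with \<open>h (a \<otimes> b) = z\<close>,
  grouped by the value of \<open>a \<otimes> b\<close> on the left and of \<open>(h a, h b)\<close> on the right.\<close>

lemma gr_map_mult:
  assumes "monoid G" "finite (carrier G)" "finite (carrier H)" "h \<in> hom G H"
  shows "gr_map G h (gr_mul G f g) = gr_mul H (gr_map G h f) (gr_map G h g)"
proof
  fix z
  let ?GG = "carrier G \<times> carrier G" and ?HH = "carrier H \<times> carrier H"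
  let ?\<phi> = "\<lambda>p. f (fst p) * g (snd p)"
  have mult_closed: "fst p \<otimes>\<^bsub>G\<^esub> snd p \<in> carrier G" if "p \<in> ?GG" for p
    using that monoid.m_closed[OF assms(1)] by auto
  have h_into: "h u \<in> carrier H" if "u \<in> carrier G" for u
    using that assms(4) by (auto simp: hom_def)
  have fiber: "gr_mul G f g w = sum ?\<phi> {p \<in> ?GG. fst p \<otimes>\<^bsub>G\<^esub> snd p = w}" for w
    unfolding gr_mul_def by (rule sum.cong) auto
  have "gr_map G h (gr_mul G f g) z
      = (\<Sum>w\<in>{w \<in> carrier G. h w = z}. sum ?\<phi> {p \<in> {p \<in> ?GG. h (fst p \<otimes>\<^bsub>G\<^esub> snd p) = z}.
            fst p \<otimes>\<^bsub>G\<^esub> snd p = w})"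
    unfolding gr_map_def fiber by (intro sum.cong) auto
  also have "\<dots> = sum ?\<phi> {p \<in> ?GG. h (fst p \<otimes>\<^bsub>G\<^esub> snd p) = z}"
    using assms(2) mult_closed by (intro sum.group) auto
  also have "\<dots> = sum ?\<phi> {p \<in> ?GG. h (fst p) \<otimes>\<^bsub>H\<^esub> h (snd p) = z}"
    using assms(4) by (intro sum.cong) (auto simp: hom_def)
  also have "\<dots> = (\<Sum>q\<in>{q \<in> ?HH. fst q \<otimes>\<^bsub>H\<^esub> snd q = z}.
      sum ?\<phi> {p \<in> {p \<in> ?GG. h (fst p) \<otimes>\<^bsub>H\<^esub> h (snd p) = z}. map_prod h h p = q})"
    using assms(2,3) h_into by (intro sum.group[symmetric]) auto
  also have "\<dots> = (\<Sum>q\<in>{q \<in> ?HH. fst q \<otimes>\<^bsub>H\<^esub> snd q = z}.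
      (\<Sum>a\<in>{a \<in> carrier G. h a = fst q}. f a) * (\<Sum>b\<in>{b \<in> carrier G. h b = snd q}. g b))"
  proof (intro sum.cong refl)
    fix q assume "q \<in> {q \<in> ?HH. fst q \<otimes>\<^bsub>H\<^esub> snd q = z}"
    then have "{p \<in> {p \<in> ?GG. h (fst p) \<otimes>\<^bsub>H\<^esub> h (snd p) = z}. map_prod h h p = q}
        = {a \<in> carrier G. h a = fst q} \<times> {b \<in> carrier G. h b = snd q}"
      by (cases q) auto
    then show "sum ?\<phi> {p \<in> {p \<in> ?GG. h (fst p) \<otimes>\<^bsub>H\<^esub> h (snd p) = z}. map_prod h h p = q}
        = (\<Sum>a\<in>{a \<in> carrier G. h a = fst q}. f a) * (\<Sum>b\<in>{b \<in> carrier G. h b = snd q}. g b)"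
      by (simp add: sum_product sum.cartesian_product case_prod_beta)
  qed
  also have "\<dots> = gr_mul H (gr_map G h f) (gr_map G h g) z"
    unfolding gr_mul_def gr_map_def by (rule sum.cong) auto
  finally show "gr_map G h (gr_mul G f g) z = gr_mul H (gr_map G h f) (gr_map G h g) z" .
qed

section \<open>The cyclic groups \<open>C\<^sub>m\<close>\<close>

lemma cyc_simps [simp]:
  "carrier (cyc m) = {0..<m}" "x \<otimes>\<^bsub>cyc m\<^esub> y = (x + y) mod m" "\<one>\<^bsub>cyc m\<^esub> = 0"
  by (simp_all add: cyc_def)

lemma comm_group_cyc:
  assumes "0 < m"
  shows "comm_group (cyc m)"
proof (rule comm_groupI)
  fix u assume "u \<in> carrier (cyc m)"
  then show "\<exists>v\<in>carrier (cyc m). v \<otimes>\<^bsub>cyc m\<^esub> u = \<one>\<^bsub>cyc m\<^esub>"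
    using assms by (intro bexI[of _ "(- u) mod m"]) (auto simp: mod_simps)
qed (use assms in \<open>auto simp: mod_simps ac_simps\<close>)

lemma inv_cyc:
  assumes "0 < m" "u \<in> {0..<m}"
  shows "inv\<^bsub>cyc m\<^esub> u = (- u) mod m"
proof -
  interpret comm_group "cyc m"
    using assms(1) by (rule comm_group_cyc)
  show ?thesis
    by (rule inv_equality) (use assms in \<open>auto simp: mod_simps\<close>)
qed

lemma gr_mul_cyc_closed: "0 < m \<Longrightarrow> gr_mul (cyc m) f g \<in> gr_elems (cyc m)"
  by (rule gr_mul_closed) auto

lemma gr_mul_cyc_as_double_sum:
  "0 < m \<Longrightarrow> gr_mul (cyc m) f g z =
    (\<Sum>i\<in>{0..<m}. \<Sum>k\<in>{0..<m}. if (i + k) mod m = z then f i * g k else 0)"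
  by (simp add: gr_mul_as_double_sum)

lemma cx_closed: "0 < m \<Longrightarrow> cx m k \<in> gr_elems (cyc m)"
  by (simp add: cx_def gr_of_def gr_elems_def)

lemma gr_one_cyc: "gr_one (cyc m) = cx m 0"
  by (simp add: gr_one_def cx_def)

lemma cx_mult:
  assumes "0 < m"
  shows "gr_mul (cyc m) (cx m a) (cx m b) = cx m (a + b)"
proof -
  interpret comm_group "cyc m"
    using assms by (rule comm_group_cyc)
  show ?thesis
    using assms by (simp add: cx_def gr_of_mult mod_simps)
qed

lemma gr_mul_cx_right:
  assumes "0 < m" "0 \<le> z" "z < m"
  shows "gr_mul (cyc m) f (cx m c) z = f ((z - c) mod m)"
proof -
  interpret comm_group "cyc m"
    using assms(1) by (rule comm_group_cyc)
  show ?thesis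
    using assms by (simp add: cx_def gr_mul_gr_of_right inv_cyc mod_simps)
qed

lemma cbar_eq:
  assumes "0 < n" "0 \<le> k" "k < 2 * n"
  shows "cbar n f k = f ((- k) mod (2 * n))"
proof -
  have "{u \<in> {0..<2 * n}. (- u) mod (2 * n) = k} = {(- k) mod (2 * n)}"
    using assms by (auto simp: mod_simps)
  then show ?thesis
    by (simp add: cbar_def gr_map_def)
qed

lemma cbar_closed: "cbar n f \<in> gr_elems (cyc (2 * n))"
  unfolding cbar_def by (rule gr_map_closed) simp

lemma cbar_cx: "0 < n \<Longrightarrow> cbar n (cx (2 * n) k) = cx (2 * n) (- k)"
  by (simp add: cbar_def cx_def gr_map_gr_of mod_simps)

lemma gr_mul_cbar_right:
  assumes "0 < n"
  shows "gr_mul (cyc (2 * n)) f (cbar n g) z =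
    (\<Sum>i\<in>{0..<2 * n}. \<Sum>k\<in>{0..<2 * n}. if (i - k) mod (2 * n) = z then f i * g k else 0)"
proof -
  have "(\<Sum>k\<in>{0..<2 * n}. if (i + k) mod (2 * n) = z then f i * cbar n g k else 0)
      = (\<Sum>k\<in>{0..<2 * n}. if (i - k) mod (2 * n) = z then f i * g k else 0)" for i
    using assms
    by (intro sum.reindex_bij_witness[of _ "\<lambda>k. (- k) mod (2 * n)" "\<lambda>k. (- k) mod (2 * n)"])
       (auto simp: cbar_eq mod_simps)
  then show ?thesis
    using assms by (simp add: gr_mul_cyc_as_double_sum)
qed

lemma mod_hom_cyc: "0 < n \<Longrightarrow> (\<lambda>i. i mod n) \<in> hom (cyc (2 * n)) (cyc n)"
  by (auto simp: hom_def mod_mod_cancel mod_simps)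

lemma qmap_mult:
  assumes "0 < n"
  shows "qmap n (gr_mul (cyc (2 * n)) f g) = gr_mul (cyc n) (qmap n f) (qmap n g)"
proof -
  interpret comm_group "cyc (2 * n)"
    using assms by (intro comm_group_cyc) simp
  show ?thesis
    unfolding qmap_def by (rule gr_map_mult) (use assms mod_hom_cyc in auto)
qed

lemma qmap_cx: "0 < n \<Longrightarrow> qmap n (cx (2 * n) k) = cx n k"
  by (simp add: qmap_def cx_def gr_map_gr_of mod_mod_cancel)

lemma qmap_eq: "0 < n \<Longrightarrow> qmap n f z = (if 0 \<le> z \<and> z < n then f z + f (z + n) else 0)"
proof -
  assume n: "0 < n"
  have "{u \<in> {0..<2 * n}. u mod n = z} = (if 0 \<le> z \<and> z < n then {z, z + n} else {})"
  proof (cases "0 \<le> z \<and> z < n")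
    case True
    have "u mod n = z \<longleftrightarrow> u = z \<or> u = z + n" if "0 \<le> u" "u < 2 * n" for u
    proof (cases "u < n")
      case False
      have "u mod n = (u - n) mod n"
        by (metis diff_add_cancel mod_add_self2)
      also have "\<dots> = u - n"
        using False that by (intro mod_pos_pos_trivial) auto
      finally show ?thesis
        using False True by auto
    qed (use that True in auto)
    with True n show ?thesis
      by auto
  qed (use n in auto)
  with n show ?thesis
    by (simp add: qmap_def gr_map_def)
qed

lemma qmap_closed: "0 < n \<Longrightarrow> qmap n f \<in> gr_elems (cyc n)"
  by (simp add: gr_elems_def qmap_eq)

definition lift :: "int \<Rightarrow> (int \<Rightarrow> int) \<Rightarrow> (int \<Rightarrow> int)" where
  "lift n d = (\<lambda>i. if 0 \<le> i \<and> i < n then d i else 0)"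

lemma lift_closed: "lift n d \<in> gr_elems (cyc (2 * n))"
  by (simp add: gr_elems_def lift_def)

lemma qmap_lift: "0 < n \<Longrightarrow> d \<in> gr_elems (cyc n) \<Longrightarrow> qmap n (lift n d) = d"
  by (auto simp: qmap_eq lift_def gr_elems_def)

lemma qmap_kernel:
  assumes n: "0 < n" and h: "h \<in> gr_elems (cyc (2 * n))" and q: "qmap n h = (\<lambda>_. 0)"
  shows "gr_mul (cyc (2 * n)) (lift n h) (gr_sub (gr_one (cyc (2 * n))) (cx (2 * n) n)) = h"
proof
  fix z
  have antipodal: "h z + h (z + n) = 0" if "0 \<le> z" "z < n" for z
    using fun_cong[OF q, of z] n that by (simp add: qmap_eq)
  show "gr_mul (cyc (2 * n)) (lift n h) (gr_sub (gr_one (cyc (2 * n))) (cx (2 * n) n)) z = h z"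
  proof (cases "0 \<le> z \<and> z < 2 * n")
    case True
    have "(z - n) mod (2 * n) = (z - n + 2 * n) mod (2 * n)"
      by (simp only: mod_add_self2)
    then have "(z - n) mod (2 * n) = (if z < n then z + n else z - n)"
      using True by (auto intro: mod_pos_pos_trivial)
    then show ?thesis
      using True n antipodal[of "z - n"] unfolding gr_mul_sub_right gr_one_cyc
      by (auto simp: gr_sub_def gr_mul_cx_right lift_def)
  next
    case False
    then show ?thesis
      using n h gr_mul_cyc_closed[of "2 * n"] unfolding gr_mul_sub_right
      by (simp add: gr_elems_def gr_sub_def)
  qed
qed

section \<open>\<open>\<int>Q\<^sub>4\<^sub>n\<close> as a free \<open>\<int>C\<^sub>2\<^sub>n\<close>-module with basis \<open>1, y\<close>\<close>

text \<open>\<open>quat_pair a b\<close> is the element \<open>a + b y\<close> of \<open>\<int>Q\<^sub>4\<^sub>n\<close>, for \<open>a, b \<in> \<int>C\<^sub>2\<^sub>n = \<int>\<langle>x\<rangle>\<close>.\<close>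

definition quat_pair :: "(int \<Rightarrow> int) \<Rightarrow> (int \<Rightarrow> int) \<Rightarrow> (int \<times> int \<Rightarrow> int)" where
  "quat_pair a b = (\<lambda>(i, j). if j = 0 then a i else if j = 1 then b i else 0)"

lemma quat_pair_simps [simp]: "quat_pair a b (i, 0) = a i" "quat_pair a b (i, 1) = b i"
  by (simp_all add: quat_pair_def)

lemma quat_simps [simp]:
  "carrier (quat n) = {0..<2 * n} \<times> {0, 1}"
  "(i, j) \<otimes>\<^bsub>quat n\<^esub> (k, l) =
     (if j = 0 then ((i + k) mod (2 * n), l)
      else if l = 0 then ((i - k) mod (2 * n), 1) else ((i - k + n) mod (2 * n), 0))"
  by (auto simp: quat_def)

lemma sum_quat_carrier:
  fixes n :: int and F :: "int \<times> int \<Rightarrow> int"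
  shows "(\<Sum>u\<in>{0..<2 * n} \<times> {0, 1}. F u) = (\<Sum>i\<in>{0..<2 * n}. F (i, 0) + F (i, 1))"
proof -
  have "(\<Sum>u\<in>{0..<2 * n} \<times> {0, 1}. F u) = (\<Sum>i\<in>{0..<2 * n}. \<Sum>j\<in>{0, 1}. F (i, j))"
    by (subst sum.cartesian_product) simp
  then show ?thesis
    by simp
qed

lemma gr_mul_quat_closed: "gr_mul (quat n) f g \<in> gr_elems (quat n)"
  by (rule gr_mul_closed) auto

lemma gr_mul_quat_pair_fst:
  assumes "0 < n" "0 \<le> z" "z < 2 * n"
  shows "gr_mul (quat n) (quat_pair a1 a2) (quat_pair b1 b2) (z, 0) =
    gr_mul (cyc (2 * n)) a1 b1 z +
    gr_mul (cyc (2 * n)) (cx (2 * n) n) (gr_mul (cyc (2 * n)) a2 (cbar n b2)) z"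
proof -
  interpret comm_group "cyc (2 * n)"
    using assms by (intro comm_group_cyc) simp
  have "(i - k) mod (2 * n) = (z - n) mod (2 * n) \<longleftrightarrow> (i - k + n) mod (2 * n) = z mod (2 * n)"
    for i k by (simp add: mod_eq_dvd_iff algebra_simps)
  then have "(i - k) mod (2 * n) = (z - n) mod (2 * n) \<longleftrightarrow> (i - k + n) mod (2 * n) = z" for i k
    using assms by simp
  then have "gr_mul (cyc (2 * n)) (cx (2 * n) n) (gr_mul (cyc (2 * n)) a2 (cbar n b2)) z
      = (\<Sum>i\<in>{0..<2 * n}. \<Sum>k\<in>{0..<2 * n}. if (i - k + n) mod (2 * n) = z then a2 i * b2 k else 0)"
    using assms by (simp add: gr_mul_comm[of "cx _ _"] gr_mul_cx_right gr_mul_cbar_right)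
  then show ?thesis
    using assms
    by (simp add: gr_mul_as_double_sum sum_quat_carrier gr_mul_cyc_as_double_sum sum.distrib
        cong: if_cong)
qed

lemma gr_mul_quat_pair_snd:
  assumes "0 < n" "0 \<le> z" "z < 2 * n"
  shows "gr_mul (quat n) (quat_pair a1 a2) (quat_pair b1 b2) (z, 1) =
    gr_mul (cyc (2 * n)) a1 b2 z + gr_mul (cyc (2 * n)) a2 (cbar n b1) z"
  using assms
  by (simp add: gr_mul_cbar_right)
     (simp add: gr_mul_as_double_sum sum_quat_carrier gr_mul_cyc_as_double_sum sum.distrib
      cong: if_cong)

text \<open>\<open>(a\<^sub>1 + a\<^sub>2 y)(b\<^sub>1 + b\<^sub>2 y) = a\<^sub>1 b\<^sub>1 + x\<^sup>n a\<^sub>2 cbar b\<^sub>2 + (a\<^sub>1 b\<^sub>2 + a\<^sub>2 cbar b\<^sub>1) y\<close>, because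
  \<open>y c = cbar c y\<close> and \<open>y\<^sup>2 = x\<^sup>n\<close>.\<close>

lemma gr_mul_quat_pair:
  assumes "0 < n"
  shows "gr_mul (quat n) (quat_pair a1 a2) (quat_pair b1 b2) =
    quat_pair
      (gr_add (gr_mul (cyc (2 * n)) a1 b1)
         (gr_mul (cyc (2 * n)) (cx (2 * n) n) (gr_mul (cyc (2 * n)) a2 (cbar n b2))))
      (gr_add (gr_mul (cyc (2 * n)) a1 b2) (gr_mul (cyc (2 * n)) a2 (cbar n b1)))"
    (is "_ = ?rhs")
proof (rule ext, clarify)
  fix z j :: int
  show "gr_mul (quat n) (quat_pair a1 a2) (quat_pair b1 b2) (z, j) = ?rhs (z, j)"
  proof (cases "(z, j) \<in> carrier (quat n)")
    case True
    then show ?thesis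
      using assms by (auto simp: gr_mul_quat_pair_fst gr_mul_quat_pair_snd gr_add_def)
  next
    case False
    then show ?thesis
      using assms gr_mul_quat_closed[of n] gr_mul_cyc_closed[of "2 * n"]
      by (auto simp: gr_elems_def gr_add_def quat_pair_def)
  qed
qed

lemma quat_pair_closed:
  "a \<in> gr_elems (cyc (2 * n)) \<Longrightarrow> b \<in> gr_elems (cyc (2 * n)) \<Longrightarrow> quat_pair a b \<in> gr_elems (quat n)"
  by (auto simp: gr_elems_def quat_pair_def)

lemma quat_pair_cases:
  assumes "f \<in> gr_elems (quat n)"
  obtains a b where "f = quat_pair a b" "a \<in> gr_elems (cyc (2 * n))" "b \<in> gr_elems (cyc (2 * n))"
proof
  show "f = quat_pair (\<lambda>i. f (i, 0)) (\<lambda>i. f (i, 1))"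
    using assms by (auto simp: gr_elems_def quat_pair_def)
qed (use assms in \<open>auto simp: gr_elems_def\<close>)

lemma quat_pair_eq_iff: "quat_pair a b = quat_pair c d \<longleftrightarrow> a = c \<and> b = d"
  by (metis ext quat_pair_simps)

lemma quat_pair_add: "gr_add (quat_pair a b) (quat_pair c d) = quat_pair (gr_add a c) (gr_add b d)"
  by (auto simp: gr_add_def quat_pair_def)

lemma quat_pair_sub: "gr_sub (quat_pair a b) (quat_pair c d) = quat_pair (gr_sub a c) (gr_sub b d)"
  by (auto simp: gr_sub_def quat_pair_def)

lemma quat_pair_neg: "gr_neg (quat_pair a b) = quat_pair (gr_neg a) (gr_neg b)"
  by (auto simp: gr_neg_def quat_pair_def)

lemma gr_one_quat: "gr_one (quat n) = quat_pair (gr_one (cyc (2 * n))) (\<lambda>_. 0)"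
  by (auto simp: gr_one_def gr_of_def quat_def quat_pair_def)

lemma gr_of_qx: "0 < n \<Longrightarrow> gr_of qx = quat_pair (cx (2 * n) 1) (\<lambda>_. 0)"
  by (auto simp: qx_def cx_def gr_of_def quat_pair_def)

lemma gr_of_qy: "gr_of qy = quat_pair (\<lambda>_. 0) (gr_one (cyc (2 * n)))"
  by (auto simp: qy_def gr_one_def gr_of_def quat_pair_def)

lemma incl_eq:
  assumes "a \<in> gr_elems (cyc (2 * n))"
  shows "incl n a = quat_pair a (\<lambda>_. 0)"
proof (rule ext, clarify)
  fix i j :: int
  have "{u \<in> {0..<2 * n}. (u, 0) = (i, j)} = (if j = 0 \<and> 0 \<le> i \<and> i < 2 * n then {i} else {})"
    by auto
  then show "incl n a (i, j) = quat_pair a (\<lambda>_. 0) (i, j)"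
    using assms by (auto simp: incl_def gr_map_def quat_pair_def gr_elems_def)
qed

section \<open>The equation \<open>\<alpha>(xy - 1) + \<beta>\<lambda> = 1\<close>\<close>

definition quat_solution ::
    "int \<Rightarrow> (int \<Rightarrow> int) \<Rightarrow> (int \<times> int \<Rightarrow> int) \<Rightarrow> (int \<times> int \<Rightarrow> int) \<Rightarrow> bool" where
  "quat_solution n l \<alpha> \<beta> \<longleftrightarrow>
    gr_add (gr_mul (quat n) \<alpha> (gr_sub (gr_mul (quat n) (gr_of qx) (gr_of qy)) (gr_one (quat n))))
      (gr_mul (quat n) \<beta> (incl n l)) = gr_one (quat n)"

locale quat_ring =
  fixes n :: int and R (structure) and Rn
  defines R_def: "R \<equiv> group_ring (cyc (2 * n))" and Rn_def: "Rn \<equiv> group_ring (cyc n)"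
  assumes n_pos: "0 < n"
begin

abbreviation xpow :: "int \<Rightarrow> int \<Rightarrow> int" where "xpow k \<equiv> cx (2 * n) k"

sublocale cring R
  unfolding R_def using n_pos by (intro cring_group_ring comm_group_cyc) simp_all

sublocale Rn: cring Rn
  unfolding Rn_def using n_pos by (intro cring_group_ring comm_group_cyc) simp_all

lemma R_carrier: "carrier R = gr_elems (cyc (2 * n))"
  by (simp add: R_def group_ring_simps)

lemma R_ops:
  "gr_mul (cyc (2 * n)) a b = a \<otimes> b" "gr_add a b = a \<oplus> b" "gr_one (cyc (2 * n)) = \<one>"
  "(\<lambda>_. 0) = \<zero>"
  by (simp_all add: R_def group_ring_simps)

lemma Rn_ops:
  "gr_mul (cyc n) a b = a \<otimes>\<^bsub>Rn\<^esub> b" "gr_add a b = a \<oplus>\<^bsub>Rn\<^esub> b" "gr_one (cyc n) = \<one>\<^bsub>Rn\<^esub>"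
  by (simp_all add: Rn_def group_ring_simps)

lemma R_minus: "a \<in> carrier R \<Longrightarrow> b \<in> carrier R \<Longrightarrow> gr_sub a b = a \<ominus> b"
  by (simp add: R_def group_ring_minus group_ring_simps)

lemma R_a_inv: "a \<in> carrier R \<Longrightarrow> gr_neg a = \<ominus> a"
  by (simp add: R_def group_ring_a_inv group_ring_simps)

lemma xpow_closed [simp]: "xpow k \<in> carrier R"
  using n_pos by (simp add: R_carrier cx_closed)

lemma cbar_in_carrier [simp]: "cbar n a \<in> carrier R"
  by (simp add: R_carrier cbar_closed)

lemma xpow_inverse: "xpow 1 \<otimes> xpow (-1) = \<one>"
  using n_pos by (simp add: R_ops(1,3)[symmetric] cx_mult gr_one_cyc)

lemma cbar_xpow: "cbar n (xpow k) = xpow (- k)"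
  using n_pos by (rule cbar_cx)

lemma cbar_one: "cbar n \<one> = \<one>"
  using cbar_xpow[of 0] by (simp add: R_ops(3)[symmetric] gr_one_cyc)

lemma cbar_zero: "cbar n \<zero> = \<zero>"
  by (simp add: R_ops(4)[symmetric] cbar_def gr_map_def)

lemma cbar_a_inv:
  assumes "a \<in> carrier R"
  shows "cbar n (\<ominus> a) = \<ominus> cbar n a"
proof -
  have "cbar n (gr_neg a) = gr_neg (cbar n a)"
    by (simp add: cbar_def gr_map_neg)
  then show ?thesis
    using assms by (simp add: R_a_inv)
qed

lemma qmap_ring_hom: "qmap n \<in> ring_hom R Rn"
proof (rule ring_hom_memI)
  show "qmap n (a \<otimes> b) = qmap n a \<otimes>\<^bsub>Rn\<^esub> qmap n b" for a b
    using n_pos by (simp add: R_def Rn_def group_ring_simps qmap_mult)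
  show "qmap n (a \<oplus> b) = qmap n a \<oplus>\<^bsub>Rn\<^esub> qmap n b" for a b
    by (simp add: R_def Rn_def group_ring_simps qmap_def gr_map_add)
  show "qmap n \<one> = \<one>\<^bsub>Rn\<^esub>"
    using n_pos by (simp add: R_def Rn_def group_ring_simps gr_one_cyc qmap_cx)
qed (use n_pos in \<open>simp add: Rn_def group_ring_simps qmap_closed\<close>)

sublocale q: ring_hom_cring R Rn "qmap n"
  by unfold_locales (rule qmap_ring_hom)

lemma qmap_xpow_n: "qmap n (xpow n) = \<one>\<^bsub>Rn\<^esub>"
  using n_pos by (simp add: Rn_def group_ring_simps qmap_cx gr_one_cyc) (simp add: cx_def)

lemma qmap_kernel_ring:
  assumes "h \<in> carrier R" "qmap n h = \<zero>\<^bsub>Rn\<^esub>"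
  shows "lift n h \<otimes> (\<one> \<ominus> xpow n) = h"
  using qmap_kernel[OF n_pos, of h] assms
  by (simp add: Rn_def group_ring_simps R_carrier[symmetric] R_minus R_ops)

lemma gr_of_qx_mult_qy: "gr_mul (quat n) (gr_of qx) (gr_of qy) = quat_pair \<zero> (xpow 1)"
  unfolding gr_of_qx[OF n_pos] gr_of_qy[of n] gr_mul_quat_pair[OF n_pos] R_ops
  by (simp add: cbar_one cbar_zero)

lemma incl_mult_xy:
  assumes "a \<in> carrier R"
  shows "gr_mul (quat n) (incl n a) (gr_mul (quat n) (gr_of qx) (gr_of qy)) =
    quat_pair \<zero> (a \<otimes> xpow 1)"
  unfolding gr_of_qx_mult_qy incl_eq[OF assms[unfolded R_carrier]] gr_mul_quat_pair[OF n_pos] R_ops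
  using assms by (simp add: cbar_zero)

lemma quat_solution_iff:
  assumes a: "a1 \<in> carrier R" "a2 \<in> carrier R" and b: "b1 \<in> carrier R" "b2 \<in> carrier R"
    and l: "l \<in> carrier R"
  shows "quat_solution n l (quat_pair a1 a2) (quat_pair b1 b2) \<longleftrightarrow>
    \<ominus> a1 \<oplus> xpow n \<otimes> a2 \<otimes> xpow (-1) \<oplus> b1 \<otimes> l = \<one> \<and> a1 \<otimes> xpow 1 \<ominus> a2 \<oplus> b2 \<otimes> cbar n l = \<zero>"
proof -
  have xy_minus_one:
    "gr_sub (gr_mul (quat n) (gr_of qx) (gr_of qy)) (gr_one (quat n)) = quat_pair (\<ominus> \<one>) (xpow 1)"
    by (simp add: gr_of_qx_mult_qy gr_one_quat quat_pair_sub R_ops R_minus minus_eq)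
  have lhs: "gr_add (gr_mul (quat n) (quat_pair a1 a2) (quat_pair (\<ominus> \<one>) (xpow 1)))
      (gr_mul (quat n) (quat_pair b1 b2) (incl n l))
    = quat_pair
        (a1 \<otimes> \<ominus> \<one> \<oplus> xpow n \<otimes> (a2 \<otimes> xpow (-1)) \<oplus> (b1 \<otimes> l \<oplus> xpow n \<otimes> (b2 \<otimes> \<zero>)))
        (a1 \<otimes> xpow 1 \<oplus> a2 \<otimes> \<ominus> \<one> \<oplus> (b1 \<otimes> \<zero> \<oplus> b2 \<otimes> cbar n l))"
    unfolding incl_eq[OF l[unfolded R_carrier]] gr_mul_quat_pair[OF n_pos] quat_pair_add R_ops
      cbar_xpow cbar_zero cbar_a_inv[OF one_closed] cbar_one ..
  have first: "a1 \<otimes> \<ominus> \<one> \<oplus> xpow n \<otimes> (a2 \<otimes> xpow (-1)) \<oplus> (b1 \<otimes> l \<oplus> xpow n \<otimes> (b2 \<otimes> \<zero>))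
      = \<ominus> a1 \<oplus> xpow n \<otimes> a2 \<otimes> xpow (-1) \<oplus> b1 \<otimes> l"
    using a b l xpow_closed[of n] xpow_closed[of "-1"] by algebra
  have second: "a1 \<otimes> xpow 1 \<oplus> a2 \<otimes> \<ominus> \<one> \<oplus> (b1 \<otimes> \<zero> \<oplus> b2 \<otimes> cbar n l)
      = a1 \<otimes> xpow 1 \<ominus> a2 \<oplus> b2 \<otimes> cbar n l"
    using a b l xpow_closed[of 1] cbar_in_carrier[of l] by algebra
  show ?thesis
    unfolding quat_solution_def xy_minus_one
    unfolding gr_one_quat R_ops lhs first second quat_pair_eq_iff ..
qed

lemma quat_solution_of_relation:
  assumes "\<delta> \<in> carrier R" "\<gamma> \<in> carrier R" "\<epsilon> \<in> carrier R" "l \<in> carrier R"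
    and rel: "\<delta> \<otimes> l \<oplus> \<gamma> \<otimes> cbar n l \<oplus> \<epsilon> \<otimes> (xpow n \<ominus> \<one>) = \<one>"
  shows "quat_solution n l (quat_pair (\<epsilon> \<ominus> \<gamma> \<otimes> cbar n l) (\<epsilon> \<otimes> xpow 1)) (quat_pair \<delta> (\<gamma> \<otimes> xpow 1))"
proof -
  note closed = assms(1-4) xpow_closed[of n] xpow_closed[of 1] xpow_closed[of "-1"] cbar_in_carrier[of l]
  have "\<ominus> (\<epsilon> \<ominus> \<gamma> \<otimes> cbar n l) \<oplus> xpow n \<otimes> (\<epsilon> \<otimes> xpow 1) \<otimes> xpow (-1) \<oplus> \<delta> \<otimes> l
      = (\<delta> \<otimes> l \<oplus> \<gamma> \<otimes> cbar n l \<oplus> \<epsilon> \<otimes> (xpow n \<ominus> \<one>)) \<oplus> xpow n \<otimes> \<epsilon> \<otimes> (xpow 1 \<otimes> xpow (-1) \<ominus> \<one>)"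
    using closed by algebra
  also have "\<dots> = \<one>"
    using closed by (simp only: rel xpow_inverse) (simp add: minus_eq r_neg)
  moreover have "(\<epsilon> \<ominus> \<gamma> \<otimes> cbar n l) \<otimes> xpow 1 \<ominus> \<epsilon> \<otimes> xpow 1 \<oplus> \<gamma> \<otimes> xpow 1 \<otimes> cbar n l = \<zero>"
    using closed by algebra
  ultimately show ?thesis
    using closed by (simp add: quat_solution_iff)
qed

lemma relation_of_quat_solution:
  assumes a: "a1 \<in> carrier R" "a2 \<in> carrier R" and b: "b1 \<in> carrier R" "b2 \<in> carrier R"
    and l: "l \<in> carrier R" and sol: "quat_solution n l (quat_pair a1 a2) (quat_pair b1 b2)"
  shows "b1 \<otimes> l \<oplus> (xpow n \<otimes> xpow (-1) \<otimes> b2) \<otimes> cbar n l \<oplus> a1 \<otimes> (xpow n \<ominus> \<one>) = \<one>"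
proof -
  note closed = a b l xpow_closed[of n] xpow_closed[of 1] xpow_closed[of "-1"] cbar_in_carrier[of l]
  \<comment> \<open>add \<open>x\<^sup>n x\<^sup>-\<^sup>1\<close> times the second component equation to the first, eliminating \<open>a\<^sub>2\<close>\<close>
  have "b1 \<otimes> l \<oplus> (xpow n \<otimes> xpow (-1) \<otimes> b2) \<otimes> cbar n l \<oplus> a1 \<otimes> (xpow n \<ominus> \<one>)
      = (\<ominus> a1 \<oplus> xpow n \<otimes> a2 \<otimes> xpow (-1) \<oplus> b1 \<otimes> l)
        \<oplus> xpow n \<otimes> xpow (-1) \<otimes> (a1 \<otimes> xpow 1 \<ominus> a2 \<oplus> b2 \<otimes> cbar n l)
        \<oplus> a1 \<otimes> xpow n \<otimes> (\<one> \<ominus> xpow 1 \<otimes> xpow (-1))"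
    using closed by algebra
  also have "\<dots> = \<one>"
    using sol closed by (simp add: quat_solution_iff xpow_inverse minus_eq r_neg)
  finally show ?thesis .
qed

lemma reduced_relation_of_relation:
  assumes "\<delta> \<in> carrier R" "\<gamma> \<in> carrier R" "\<epsilon> \<in> carrier R" "l \<in> carrier R"
    and rel: "\<delta> \<otimes> l \<oplus> \<gamma> \<otimes> cbar n l \<oplus> \<epsilon> \<otimes> (xpow n \<ominus> \<one>) = \<one>"
  shows "qmap n \<delta> \<otimes>\<^bsub>Rn\<^esub> qmap n l \<oplus>\<^bsub>Rn\<^esub> qmap n \<gamma> \<otimes>\<^bsub>Rn\<^esub> qmap n (cbar n l) = \<one>\<^bsub>Rn\<^esub>"
proof -
  have "qmap n (\<delta> \<otimes> l \<oplus> \<gamma> \<otimes> cbar n l \<oplus> \<epsilon> \<otimes> (xpow n \<ominus> \<one>))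
      = qmap n \<delta> \<otimes>\<^bsub>Rn\<^esub> qmap n l \<oplus>\<^bsub>Rn\<^esub> qmap n \<gamma> \<otimes>\<^bsub>Rn\<^esub> qmap n (cbar n l)"
    using assms(1-4) by (simp add: minus_eq qmap_xpow_n Rn.r_neg)
  then show ?thesis by (simp add: rel)
qed

lemma relation_of_reduced_relation:
  assumes "\<delta> \<in> carrier R" "\<gamma> \<in> carrier R" "l \<in> carrier R"
    and rel: "qmap n \<delta> \<otimes>\<^bsub>Rn\<^esub> qmap n l \<oplus>\<^bsub>Rn\<^esub> qmap n \<gamma> \<otimes>\<^bsub>Rn\<^esub> qmap n (cbar n l) = \<one>\<^bsub>Rn\<^esub>"
  obtains \<epsilon> where "\<epsilon> \<in> carrier R" "\<delta> \<otimes> l \<oplus> \<gamma> \<otimes> cbar n l \<oplus> \<epsilon> \<otimes> (xpow n \<ominus> \<one>) = \<one>"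
proof -
  define h where "h = \<delta> \<otimes> l \<oplus> \<gamma> \<otimes> cbar n l \<ominus> \<one>"
  define \<epsilon> where "\<epsilon> = lift n h"
  have h: "h \<in> carrier R"
    using assms by (simp add: h_def)
  have \<epsilon>: "\<epsilon> \<in> carrier R"
    using n_pos by (simp add: \<epsilon>_def R_carrier lift_closed)
  have "qmap n h = \<zero>\<^bsub>Rn\<^esub>"
    using assms by (simp add: h_def minus_eq Rn.r_neg)
  then have kernel: "\<epsilon> \<otimes> (\<one> \<ominus> xpow n) = h"
    unfolding \<epsilon>_def by (rule qmap_kernel_ring[OF h])
  have "\<delta> \<otimes> l \<oplus> \<gamma> \<otimes> cbar n l \<oplus> \<epsilon> \<otimes> (xpow n \<ominus> \<one>)
      = (\<delta> \<otimes> l \<oplus> \<gamma> \<otimes> cbar n l \<ominus> \<one>) \<ominus> \<epsilon> \<otimes> (\<one> \<ominus> xpow n) \<oplus> \<one>"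
    using assms \<epsilon> xpow_closed[of n] cbar_in_carrier[of l] by algebra
  also have "\<dots> = \<one>"
    unfolding h_def[symmetric] kernel using h by (simp add: minus_eq r_neg)
  finally show thesis
    using \<epsilon> by (intro that)
qed

lemma quat_solution_of_lifted_relation:
  assumes "l \<in> gr_elems (cyc (2 * n))" "\<delta> \<in> gr_elems (cyc (2 * n))" "\<gamma> \<in> gr_elems (cyc (2 * n))"
    and rel: "gr_add (gr_mul (cyc n) (qmap n \<delta>) (qmap n l))
      (gr_mul (cyc n) (qmap n \<gamma>) (qmap n (cbar n l))) = gr_one (cyc n)"
  shows "\<exists>\<epsilon> \<in> gr_elems (cyc (2 * n)).
    gr_add (gr_add (gr_mul (cyc (2 * n)) \<delta> l) (gr_mul (cyc (2 * n)) \<gamma> (cbar n l)))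
      (gr_mul (cyc (2 * n)) \<epsilon> (gr_sub (cx (2 * n) n) (gr_one (cyc (2 * n))))) = gr_one (cyc (2 * n)) \<and>
    quat_solution n l
      (gr_add (gr_sub (incl n \<epsilon>) (incl n (gr_mul (cyc (2 * n)) \<gamma> (cbar n l))))
         (gr_mul (quat n) (incl n \<epsilon>) (gr_mul (quat n) (gr_of qx) (gr_of qy))))
      (gr_add (incl n \<delta>) (gr_mul (quat n) (incl n \<gamma>) (gr_mul (quat n) (gr_of qx) (gr_of qy))))"
proof -
  note closed = assms(1-3)[folded R_carrier]
  obtain \<epsilon> where \<epsilon>: "\<epsilon> \<in> carrier R"
    and rel_R: "\<delta> \<otimes> l \<oplus> \<gamma> \<otimes> cbar n l \<oplus> \<epsilon> \<otimes> (xpow n \<ominus> \<one>) = \<one>"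
    by (rule relation_of_reduced_relation[OF closed(2,3,1) rel[unfolded Rn_ops]])
  have "gr_add (gr_sub (incl n \<epsilon>) (incl n (gr_mul (cyc (2 * n)) \<gamma> (cbar n l))))
      (gr_mul (quat n) (incl n \<epsilon>) (gr_mul (quat n) (gr_of qx) (gr_of qy)))
    = quat_pair (\<epsilon> \<ominus> \<gamma> \<otimes> cbar n l) (\<epsilon> \<otimes> xpow 1)"
    using \<epsilon> closed unfolding incl_mult_xy[OF \<epsilon>]
    by (simp add: R_ops R_carrier[symmetric] incl_eq quat_pair_sub quat_pair_add R_minus minus_eq)
  moreover have "gr_add (incl n \<delta>) (gr_mul (quat n) (incl n \<gamma>) (gr_mul (quat n) (gr_of qx) (gr_of qy)))
    = quat_pair \<delta> (\<gamma> \<otimes> xpow 1)"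
    using closed unfolding incl_mult_xy[OF closed(3)]
    by (simp add: R_ops R_carrier[symmetric] incl_eq quat_pair_add)
  moreover have "gr_sub (cx (2 * n) n) (gr_one (cyc (2 * n))) = xpow n \<ominus> \<one>"
    by (simp add: R_ops R_minus)
  ultimately show ?thesis
    using \<epsilon> closed rel_R quat_solution_of_relation[OF closed(2,3) \<epsilon> closed(1) rel_R]
    by (auto simp: R_ops R_carrier[symmetric])
qed

lemma quat_solution_of_bezout:
  assumes "l \<in> gr_elems (cyc (2 * n))" "\<delta> \<in> gr_elems (cyc (2 * n))" "\<gamma> \<in> gr_elems (cyc (2 * n))"
    and rel: "gr_add (gr_mul (cyc (2 * n)) \<delta> l) (gr_mul (cyc (2 * n)) \<gamma> (cbar n l)) = gr_one (cyc (2 * n))"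
  shows "quat_solution n l (gr_neg (incl n (gr_mul (cyc (2 * n)) \<gamma> (cbar n l))))
    (gr_add (incl n \<delta>) (gr_mul (quat n) (incl n \<gamma>) (gr_mul (quat n) (gr_of qx) (gr_of qy))))"
proof -
  note closed = assms(1-3)[folded R_carrier]
  have "\<delta> \<otimes> l \<oplus> \<gamma> \<otimes> cbar n l \<oplus> \<zero> \<otimes> (xpow n \<ominus> \<one>) = \<one>"
    using closed rel by (simp add: R_ops)
  then have "quat_solution n l (quat_pair (\<zero> \<ominus> \<gamma> \<otimes> cbar n l) (\<zero> \<otimes> xpow 1)) (quat_pair \<delta> (\<gamma> \<otimes> xpow 1))"
    using closed by (intro quat_solution_of_relation) simp_all
  moreover have "gr_neg (incl n (gr_mul (cyc (2 * n)) \<gamma> (cbar n l)))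
    = quat_pair (\<zero> \<ominus> \<gamma> \<otimes> cbar n l) (\<zero> \<otimes> xpow 1)"
    using closed by (simp add: R_ops R_carrier[symmetric] incl_eq quat_pair_neg R_a_inv minus_eq)
  moreover have "gr_add (incl n \<delta>) (gr_mul (quat n) (incl n \<gamma>) (gr_mul (quat n) (gr_of qx) (gr_of qy)))
    = quat_pair \<delta> (\<gamma> \<otimes> xpow 1)"
    using closed unfolding incl_mult_xy[OF closed(3)]
    by (simp add: R_ops R_carrier[symmetric] incl_eq quat_pair_add)
  ultimately show ?thesis by simp
qed

lemma quat_solvable_iff_reduced_solvable:
  assumes l: "l \<in> gr_elems (cyc (2 * n))"
  shows "(\<exists>\<alpha> \<in> gr_elems (quat n). \<exists>\<beta> \<in> gr_elems (quat n). quat_solution n l \<alpha> \<beta>) \<longleftrightarrow>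
    (\<exists>\<delta> \<in> gr_elems (cyc n). \<exists>\<gamma> \<in> gr_elems (cyc n).
      gr_add (gr_mul (cyc n) \<delta> (qmap n l)) (gr_mul (cyc n) \<gamma> (qmap n (cbar n l))) = gr_one (cyc n))"
proof
  assume "\<exists>\<alpha> \<in> gr_elems (quat n). \<exists>\<beta> \<in> gr_elems (quat n). quat_solution n l \<alpha> \<beta>"
  then obtain a1 a2 b1 b2 where a: "a1 \<in> carrier R" "a2 \<in> carrier R"
    and b: "b1 \<in> carrier R" "b2 \<in> carrier R"
    and sol: "quat_solution n l (quat_pair a1 a2) (quat_pair b1 b2)"
    by (auto simp: R_carrier elim!: quat_pair_cases)
  have l': "l \<in> carrier R"
    using l by (simp add: R_carrier)
  have "qmap n b1 \<otimes>\<^bsub>Rn\<^esub> qmap n l \<oplus>\<^bsub>Rn\<^esub> qmap n (xpow n \<otimes> xpow (-1) \<otimes> b2) \<otimes>\<^bsub>Rn\<^esub> qmap n (cbar n l)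
      = \<one>\<^bsub>Rn\<^esub>"
    by (rule reduced_relation_of_relation[OF b(1) _ a(1) l' relation_of_quat_solution[OF a b l' sol]])
       (simp add: b(2))
  then show "\<exists>\<delta> \<in> gr_elems (cyc n). \<exists>\<gamma> \<in> gr_elems (cyc n).
      gr_add (gr_mul (cyc n) \<delta> (qmap n l)) (gr_mul (cyc n) \<gamma> (qmap n (cbar n l))) = gr_one (cyc n)"
    unfolding Rn_ops using n_pos qmap_closed by blast
next
  assume "\<exists>\<delta> \<in> gr_elems (cyc n). \<exists>\<gamma> \<in> gr_elems (cyc n).
      gr_add (gr_mul (cyc n) \<delta> (qmap n l)) (gr_mul (cyc n) \<gamma> (qmap n (cbar n l))) = gr_one (cyc n)"
  then obtain \<delta> \<gamma> where \<delta>: "\<delta> \<in> gr_elems (cyc n)" and \<gamma>: "\<gamma> \<in> gr_elems (cyc n)"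
    and rel: "\<delta> \<otimes>\<^bsub>Rn\<^esub> qmap n l \<oplus>\<^bsub>Rn\<^esub> \<gamma> \<otimes>\<^bsub>Rn\<^esub> qmap n (cbar n l) = \<one>\<^bsub>Rn\<^esub>"
    unfolding Rn_ops by blast
  have lifts: "lift n \<delta> \<in> carrier R" "lift n \<gamma> \<in> carrier R" and l': "l \<in> carrier R"
    using n_pos l by (simp_all add: R_carrier lift_closed)
  obtain \<epsilon> where \<epsilon>: "\<epsilon> \<in> carrier R"
    and rel_R: "lift n \<delta> \<otimes> l \<oplus> lift n \<gamma> \<otimes> cbar n l \<oplus> \<epsilon> \<otimes> (xpow n \<ominus> \<one>) = \<one>"
    using relation_of_reduced_relation[OF lifts l'] rel
    unfolding qmap_lift[OF n_pos \<delta>] qmap_lift[OF n_pos \<gamma>] by blast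
  have "quat_solution n l (quat_pair (\<epsilon> \<ominus> lift n \<gamma> \<otimes> cbar n l) (\<epsilon> \<otimes> xpow 1))
      (quat_pair (lift n \<delta>) (lift n \<gamma> \<otimes> xpow 1))"
    by (rule quat_solution_of_relation[OF lifts \<epsilon> l' rel_R])
  moreover have "quat_pair (\<epsilon> \<ominus> lift n \<gamma> \<otimes> cbar n l) (\<epsilon> \<otimes> xpow 1) \<in> gr_elems (quat n)"
    "quat_pair (lift n \<delta>) (lift n \<gamma> \<otimes> xpow 1) \<in> gr_elems (quat n)"
    using lifts \<epsilon> by (simp_all add: quat_pair_closed R_carrier[symmetric])
  ultimately show "\<exists>\<alpha> \<in> gr_elems (quat n). \<exists>\<beta> \<in> gr_elems (quat n). quat_solution n l \<alpha> \<beta>"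
    by blast
qed

end

text \<open>This is all the proof uses about \<open>\<lambda>\<^sub>R\<close>.\<close>

lemma lambdaR_closed: "0 < n \<Longrightarrow> lambdaR n ns ms \<in> gr_elems (cyc (2 * n))"
  using gr_mul_cyc_closed[of "2 * n"] by (auto simp: lambdaR_def Let_def gr_elems_def)

theorem lemma3p20:
  fixes n :: int and ns ms :: "int list"
  assumes "n \<ge> 2"
    and "length ms = length ns"
    and "\<forall>a \<in> set ns. a \<noteq> 0"
    and "\<forall>a \<in> set ms. a \<noteq> 0"
  defines "G \<equiv> quat n" and "C \<equiv> cyc (2 * n)" and "Cn \<equiv> cyc n"
    and "lam \<equiv> lambdaR n ns ms"
    and "xy \<equiv> gr_mul (quat n) (gr_of qx) (gr_of qy)"
  shows
   "((\<exists>\<alpha> \<in> gr_elems G. \<exists>\<beta> \<in> gr_elems G.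
        gr_add (gr_mul G \<alpha> (gr_sub xy (gr_one G))) (gr_mul G \<beta> (incl n lam)) = gr_one G)
     \<longleftrightarrow>
     (\<exists>\<delta> \<in> gr_elems Cn. \<exists>\<gamma> \<in> gr_elems Cn.
        gr_add (gr_mul Cn \<delta> (qmap n lam)) (gr_mul Cn \<gamma> (qmap n (cbar n lam))) = gr_one Cn))
    \<and>
    (\<forall>\<delta> \<in> gr_elems Cn. \<forall>\<gamma> \<in> gr_elems Cn.
       gr_add (gr_mul Cn \<delta> (qmap n lam)) (gr_mul Cn \<gamma> (qmap n (cbar n lam))) = gr_one Cn \<longrightarrow>
       (\<forall>\<delta>' \<in> gr_elems C. \<forall>\<gamma>' \<in> gr_elems C. qmap n \<delta>' = \<delta> \<and> qmap n \<gamma>' = \<gamma> \<longrightarrow>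
         (\<exists>\<epsilon> \<in> gr_elems C.
            gr_add (gr_add (gr_mul C \<delta>' lam) (gr_mul C \<gamma>' (cbar n lam)))
                   (gr_mul C \<epsilon> (gr_sub (cx (2 * n) n) (gr_one C))) = gr_one C
          \<and> (let \<alpha> = gr_add (gr_sub (incl n \<epsilon>) (incl n (gr_mul C \<gamma>' (cbar n lam))))
                          (gr_mul G (incl n \<epsilon>) xy);
                 \<beta> = gr_add (incl n \<delta>') (gr_mul G (incl n \<gamma>') xy)
             in gr_add (gr_mul G \<alpha> (gr_sub xy (gr_one G))) (gr_mul G \<beta> (incl n lam))
                = gr_one G))))
    \<and>
    (\<forall>\<delta> \<in> gr_elems C. \<forall>\<gamma> \<in> gr_elems C.
       gr_add (gr_mul C \<delta> lam) (gr_mul C \<gamma> (cbar n lam)) = gr_one C \<longrightarrow>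
       (let \<alpha> = gr_neg (incl n (gr_mul C \<gamma> (cbar n lam)));
            \<beta> = gr_add (incl n \<delta>) (gr_mul G (incl n \<gamma>) xy)
        in gr_add (gr_mul G \<alpha> (gr_sub xy (gr_one G))) (gr_mul G \<beta> (incl n lam)) = gr_one G))"
proof -
  have n: "0 < n" using assms(1) by simp
  interpret quat_ring n "group_ring (cyc (2 * n))" "group_ring (cyc n)"
    by unfold_locales (rule n)
  have lam: "lam \<in> gr_elems (cyc (2 * n))"
    unfolding lam_def using n by (rule lambdaR_closed)
  note solvable = quat_solvable_iff_reduced_solvable[OF lam]
    and lifted = quat_solution_of_lifted_relation[OF lam]
    and bezout = quat_solution_of_bezout[OF lam]
  show ?thesis
    unfolding G_def C_def Cn_def xy_def Let_def quat_solution_def[symmetric]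
    using solvable lifted bezout by blast
qed

end
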